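(* Assume $\lambda d(1-s^d_i)>\gamma$ for all $d,i$. A social state $x^*\in\mathcal{X}$ is a Nash equilibrium if and only if there exists $y^*\in\mathbb{R}^D$ such that $(x^*,y^* )$ is a global minimizer of the optimization problem $$\min_{x\in\mathcal{X},\,y\in\mathbb{R}^D}\ \sum_{d=1}^D\Bigl(-EF^d(x)+y^d m^d\Bigr)\quad\text{s.t.}\quad F^d_i(x)\le y^d\ \ \forall d,\ \forall i\in\{1,\dots,n^d\},$$ where $EF^d(x)=\sum_{i=1}^{n^d}x^d_iF^d_i(x)$. (Moreover the optimal value of this problem is $0$.)
   Context: Setting: $D\in\mathbb{N}_+$ populations indexed by degree $d\in\{1,\dots,D\}$, degree distribution $m^d\in(0,1]$, $\sum_d m^d=1$, $\bar d=\sum_d d\,m^d$. Population $d$ has strategies $0\le s^d_1<\dots<s^d_{n^d}\le1$. A social state is $x=(x^d_i)$ with $x^d_i\ge0$, $\sum_i x^d_i=m^d$; $\mathcal{X}$ is the set of social states. Constants $\lambda>0,\gamma>0$, $\theta^d_i=\lambda d(1-s^d_i)$, and a relative reward $r<0$. For $x\in\mathcal{X}$, let $\bar\Theta(x)$ be the unique $\Theta>0$ solving $1=\frac{1}{\bar d}\sum_d d\sum_i\frac{x^d_i\theta^d_i}{\gamma+\theta^d_i\Theta}$, and $\bar I^d_i(x)=\frac{\theta^d_i\bar\Theta(x)}{\gamma+\theta^d_i\bar\Theta(x)}$ (the positive steady state of the SI dynamics $\dot I^d_i=-\gamma I^d_i+\lambda(1-s^d_i)(1-I^d_i)d\Theta$,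 $\Theta=\bar d^{-1}\sum_d\sum_i d x^d_i I^d_i$). The payoff of a degree-$d$ player using $s^d_i$ is $F^d_i(x)=s^d_i r-(1-s^d_i)\bar I^d_i(x)$. Nash equilibrium: $x\in\mathcal{X}$ is a Nash equilibrium if for every $d$ and every $i$ with $x^d_i>0$, $F^d_i(x)=\max_{j}F^d_j(x)$ (equivalently $x^d\in m^d\,BR^d(x)$, where $BR^d(x)$ is the set of probability vectors on $\{1,\dots,n^d\}$ supported on $\arg\max_j F^d_j(x)$). *)

theory Defs
  imports Complex_Main
begin

text \<open>Populations are indexed by d in {1..D}; population d has strategies indexed by
  i in {1..n d} with values s d i.  A social state is a function x :: nat => nat => real,
  x d i being the mass of degree-d players using strategy s d i.\<close>

definition dbar :: "nat \<Rightarrow> (nat \<Rightarrow> real) \<Rightarrow> real" where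
  "dbar D m = (\<Sum>d\<in>{1..D}. real d * m d)"

definition theta :: "real \<Rightarrow> (nat \<Rightarrow> nat \<Rightarrow> real) \<Rightarrow> nat \<Rightarrow> nat \<Rightarrow> real" where
  "theta lam s d i = lam * real d * (1 - s d i)"

definition social_states :: "nat \<Rightarrow> (nat \<Rightarrow> real) \<Rightarrow> (nat \<Rightarrow> nat) \<Rightarrow> (nat \<Rightarrow> nat \<Rightarrow> real) set" where
  "social_states D m n = {x. \<forall>d\<in>{1..D}. (\<forall>i\<in>{1..n d}. 0 \<le> x d i) \<and> (\<Sum>i\<in>{1..n d}. x d i) = m d}"

text \<open>The unique positive solution Theta of the steady-state equation.\<close>
definition Thetabar :: "real \<Rightarrow> real \<Rightarrow> nat \<Rightarrow> (nat \<Rightarrow> real) \<Rightarrow> (nat \<Rightarrow> nat) \<Rightarrow>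
    (nat \<Rightarrow> nat \<Rightarrow> real) \<Rightarrow> (nat \<Rightarrow> nat \<Rightarrow> real) \<Rightarrow> real" where
  "Thetabar lam gam D m n s x = (THE \<Theta>. \<Theta> > 0 \<and>
     1 = (1 / dbar D m) * (\<Sum>d\<in>{1..D}. real d *
            (\<Sum>i\<in>{1..n d}. x d i * theta lam s d i / (gam + theta lam s d i * \<Theta>))))"

definition Ibar :: "real \<Rightarrow> real \<Rightarrow> nat \<Rightarrow> (nat \<Rightarrow> real) \<Rightarrow> (nat \<Rightarrow> nat) \<Rightarrow>
    (nat \<Rightarrow> nat \<Rightarrow> real) \<Rightarrow> (nat \<Rightarrow> nat \<Rightarrow> real) \<Rightarrow> nat \<Rightarrow> nat \<Rightarrow> real" where
  "Ibar lam gam D m n s x d i =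
     (let T = Thetabar lam gam D m n s x in theta lam s d i * T / (gam + theta lam s d i * T))"

definition payoff :: "real \<Rightarrow> real \<Rightarrow> real \<Rightarrow> nat \<Rightarrow> (nat \<Rightarrow> real) \<Rightarrow> (nat \<Rightarrow> nat) \<Rightarrow>
    (nat \<Rightarrow> nat \<Rightarrow> real) \<Rightarrow> (nat \<Rightarrow> nat \<Rightarrow> real) \<Rightarrow> nat \<Rightarrow> nat \<Rightarrow> real" where
  "payoff lam gam r D m n s x d i = s d i * r - (1 - s d i) * Ibar lam gam D m n s x d i"

definition nash_eq :: "real \<Rightarrow> real \<Rightarrow> real \<Rightarrow> nat \<Rightarrow> (nat \<Rightarrow> real) \<Rightarrow> (nat \<Rightarrow> nat) \<Rightarrow>
    (nat \<Rightarrow> nat \<Rightarrow> real) \<Rightarrow> (nat \<Rightarrow> nat \<Rightarrow> real) \<Rightarrow> bool" where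
  "nash_eq lam gam r D m n s x \<longleftrightarrow> x \<in> social_states D m n \<and>
     (\<forall>d\<in>{1..D}. \<forall>i\<in>{1..n d}. x d i > 0 \<longrightarrow>
        payoff lam gam r D m n s x d i = (MAX j\<in>{1..n d}. payoff lam gam r D m n s x d j))"

definition EF :: "real \<Rightarrow> real \<Rightarrow> real \<Rightarrow> nat \<Rightarrow> (nat \<Rightarrow> real) \<Rightarrow> (nat \<Rightarrow> nat) \<Rightarrow>
    (nat \<Rightarrow> nat \<Rightarrow> real) \<Rightarrow> (nat \<Rightarrow> nat \<Rightarrow> real) \<Rightarrow> nat \<Rightarrow> real" where
  "EF lam gam r D m n s x d = (\<Sum>i\<in>{1..n d}. x d i * payoff lam gam r D m n s x d i)"

definition objective :: "real \<Rightarrow> real \<Rightarrow> real \<Rightarrow> nat \<Rightarrow> (nat \<Rightarrow> real) \<Rightarrow> (nat \<Rightarrow> nat) \<Rightarrow>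
    (nat \<Rightarrow> nat \<Rightarrow> real) \<Rightarrow> (nat \<Rightarrow> nat \<Rightarrow> real) \<Rightarrow> (nat \<Rightarrow> real) \<Rightarrow> real" where
  "objective lam gam r D m n s x y = (\<Sum>d\<in>{1..D}. - EF lam gam r D m n s x d + y d * m d)"

definition feasible :: "real \<Rightarrow> real \<Rightarrow> real \<Rightarrow> nat \<Rightarrow> (nat \<Rightarrow> real) \<Rightarrow> (nat \<Rightarrow> nat) \<Rightarrow>
    (nat \<Rightarrow> nat \<Rightarrow> real) \<Rightarrow> (nat \<Rightarrow> nat \<Rightarrow> real) \<Rightarrow> (nat \<Rightarrow> real) \<Rightarrow> bool" where
  "feasible lam gam r D m n s x y \<longleftrightarrow> x \<in> social_states D m n \<and>
     (\<forall>d\<in>{1..D}. \<forall>i\<in>{1..n d}. payoff lam gam r D m n s x d i \<le> y d)"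

end

theory Submission
  imports Defs
begin

(* At a social state x the objective equals the sum over d, i of x^d_i (y^d - F^d_i(x)); on
   the feasible set every term is nonnegative, and all vanish exactly when each strategy in use
   earns y^d = max_j F^d_j(x). So the minimisers with value 0 are the Nash equilibria, and it
   remains to show that an equilibrium exists.
   Payoffs depend on x only through Theta, and Theta = Thetabar x iff steady_rhs x Theta = 1.
   For fixed Theta, the values of steady_rhs on states supported on best responses fill the
   interval [low_rhs Theta, high_rhs Theta]. Best-response sets are upper hemicontinuous in Theta,
   which makes low_rhs lower and high_rhs upper semicontinuous; as low_rhs > 1 near 0 (this is
   where lambda d (1 - s) > gamma enters) and high_rhs 1 < 1, connectedness of (0, oo) yields a
   Theta with low_rhs Theta <= 1 <= high_rhs Theta, and a suitable mixture of two best responses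
   in each population is an equilibrium. *)

lemma objective_eq_slack_sum:
  assumes "x \<in> social_states D m n"
  shows "objective lam gam r D m n s x y =
    (\<Sum>d\<in>{1..D}. \<Sum>i\<in>{1..n d}. x d i * (y d - payoff lam gam r D m n s x d i))"
  unfolding objective_def
proof (rule sum.cong)
  fix d assume "d \<in> {1..D}"
  then have "(\<Sum>i\<in>{1..n d}. x d i) = m d" using assms by (simp add: social_states_def)
  then show "- EF lam gam r D m n s x d + y d * m d =
      (\<Sum>i\<in>{1..n d}. x d i * (y d - payoff lam gam r D m n s x d i))"
    by (simp add: EF_def right_diff_distrib sum_subtractf sum_distrib_left[symmetric] mult.commute)
qed simp

lemma slack_nonneg:
  assumes "feasible lam gam r D m n s x y" "d \<in> {1..D}" "i \<in> {1..n d}"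
  shows "0 \<le> x d i * (y d - payoff lam gam r D m n s x d i)"
  using assms by (auto simp: feasible_def social_states_def)

lemma objective_nonneg:
  assumes "feasible lam gam r D m n s x y"
  shows "0 \<le> objective lam gam r D m n s x y"
  using assms slack_nonneg[OF assms]
  by (auto simp: objective_eq_slack_sum feasible_def intro!: sum_nonneg)

lemma nash_eq_if_objective_zero:
  assumes feas: "feasible lam gam r D m n s x y" and zero: "objective lam gam r D m n s x y = 0"
  shows "nash_eq lam gam r D m n s x"
proof -
  have x: "x \<in> social_states D m n" using feas by (simp add: feasible_def)
  have slack_zero: "x d i * (y d - payoff lam gam r D m n s x d i) = 0"
    if "d \<in> {1..D}" "i \<in> {1..n d}" for d i
  proof -
    have "(\<Sum>i\<in>{1..n d}. x d i * (y d - payoff lam gam r D m n s x d i)) = 0"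
      using zero slack_nonneg[OF feas] that(1)
      by (subst (asm) objective_eq_slack_sum[OF x], subst (asm) sum_nonneg_eq_0_iff)
        (auto intro!: sum_nonneg)
    then show ?thesis
      using slack_nonneg[OF feas] that by (subst (asm) sum_nonneg_eq_0_iff) auto
  qed
  show ?thesis unfolding nash_eq_def
  proof (intro conjI x ballI impI)
    fix d i assume d: "d \<in> {1..D}" and i: "i \<in> {1..n d}" and "0 < x d i"
    then have "payoff lam gam r D m n s x d i = y d" using slack_zero[OF d i] by simp
    with feas d i show "payoff lam gam r D m n s x d i =
        (MAX j\<in>{1..n d}. payoff lam gam r D m n s x d j)"
      by (intro Max_eqI[symmetric]) (auto simp: feasible_def intro!: image_eqI[where x = i])
  qed
qed

lemma objective_zero_if_nash_eq:
  assumes nash: "nash_eq lam gam r D m n s x"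
  defines "y \<equiv> \<lambda>d. MAX j\<in>{1..n d}. payoff lam gam r D m n s x d j"
  shows "feasible lam gam r D m n s x y \<and> objective lam gam r D m n s x y = 0"
proof
  have x: "x \<in> social_states D m n" using nash by (simp add: nash_eq_def)
  then show "feasible lam gam r D m n s x y" by (auto simp: feasible_def y_def)
  have slack_zero: "x d i * (y d - payoff lam gam r D m n s x d i) = 0"
    if "d \<in> {1..D}" "i \<in> {1..n d}" for d i
  proof (cases "0 < x d i")
    case True
    then show ?thesis using nash that by (simp add: nash_eq_def y_def)
  next
    case False
    then have "x d i = 0" using x that by (force simp: social_states_def)
    then show ?thesis by simp
  qed
  then show "objective lam gam r D m n s x y = 0"
    unfolding objective_eq_slack_sum[OF x] by (intro sum.neutral ballI slack_zero)
qed

lemma open_Collect_if_eventually: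
  fixes P :: "'a::topological_space \<Rightarrow> bool"
  assumes "\<And>x. P x \<Longrightarrow> eventually P (nhds x)"
  shows "open {x. P x}"
  by (rule openI) (force dest!: assms simp: eventually_nhds)

lemma ex_convex_combination_eq:
  fixes a b c :: real
  assumes "a \<le> c" "c \<le> b"
  obtains t where "0 \<le> t" "t \<le> 1" "t * a + (1 - t) * b = c"
proof (cases "a = b")
  case True
  then show ?thesis using assms that[of 1] by simp
next
  case False
  then have "a < b" using assms by simp
  define t where "t = (b - c) / (b - a)"
  have "t * (b - a) = b - c" using \<open>a < b\<close> by (simp add: t_def)
  then have "t * a + (1 - t) * b = c" by (simp add: algebra_simps)
  moreover have "0 \<le> t" "t \<le> 1" using assms \<open>a < b\<close> by (simp_all add: t_def field_simps)
  ultimately show ?thesis by (rule that[rotated -1])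
qed

locale sis_game =
  fixes lam gam r :: real and D :: nat and m :: "nat \<Rightarrow> real" and n :: "nat \<Rightarrow> nat"
    and s :: "nat \<Rightarrow> nat \<Rightarrow> real"
  assumes D_pos: "1 \<le> D"
    and m_pos: "\<And>d. d \<in> {1..D} \<Longrightarrow> 0 < m d"
    and n_pos: "\<And>d. d \<in> {1..D} \<Longrightarrow> 1 \<le> n d"
    and gam_pos: "0 < gam"
    and gam_less_theta: "\<And>d i. d \<in> {1..D} \<Longrightarrow> i \<in> {1..n d} \<Longrightarrow> gam < theta lam s d i"
begin

lemma dbar_pos: "0 < dbar D m"
  unfolding dbar_def using D_pos m_pos by (intro sum_pos) auto

definition deg_avg :: "(nat \<Rightarrow> real) \<Rightarrow> real" where
  "deg_avg f = (\<Sum>d\<in>{1..D}. real d * m d * f d) / dbar D m"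

lemma deg_avg_affine:
  "deg_avg (\<lambda>d. a * f d + b * h d + c) = a * deg_avg f + b * deg_avg h + c"
proof -
  have "(\<Sum>d\<in>{1..D}. real d * m d * (a * f d + b * h d + c)) =
      a * (\<Sum>d\<in>{1..D}. real d * m d * f d) + b * (\<Sum>d\<in>{1..D}. real d * m d * h d) + c * dbar D m"
    by (simp add: dbar_def algebra_simps sum.distrib sum_distrib_left)
  then show ?thesis using dbar_pos by (simp add: deg_avg_def field_simps)
qed

lemma deg_avg_add_const: "deg_avg (\<lambda>d. f d + c) = deg_avg f + c"
  using deg_avg_affine[of 1 f 0 f c] by simp

lemma deg_avg_const: "deg_avg (\<lambda>_. c) = c"
  using deg_avg_add_const[of "\<lambda>_. 0" c] deg_avg_affine[of 0 "\<lambda>_. 0" 0 "\<lambda>_. 0" 0] by simp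

lemma deg_avg_mono: "(\<And>d. d \<in> {1..D} \<Longrightarrow> f d \<le> h d) \<Longrightarrow> deg_avg f \<le> deg_avg h"
  unfolding deg_avg_def using m_pos dbar_pos
  by (intro divide_right_mono sum_mono mult_left_mono) (auto simp: less_imp_le)

lemma deg_avg_strict_mono: "(\<And>d. d \<in> {1..D} \<Longrightarrow> f d < h d) \<Longrightarrow> deg_avg f < deg_avg h"
  unfolding deg_avg_def using D_pos m_pos dbar_pos
  by (intro divide_strict_right_mono sum_strict_mono mult_strict_left_mono) auto

definition weight :: "nat \<Rightarrow> nat \<Rightarrow> real \<Rightarrow> real" where
  "weight d i T = theta lam s d i / (gam + theta lam s d i * T)"

definition steady_rhs :: "(nat \<Rightarrow> nat \<Rightarrow> real) \<Rightarrow> real \<Rightarrow> real" where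
  "steady_rhs x T = (\<Sum>d\<in>{1..D}. real d * (\<Sum>i\<in>{1..n d}. x d i * weight d i T)) / dbar D m"

lemma weight_denom_pos:
  "d \<in> {1..D} \<Longrightarrow> i \<in> {1..n d} \<Longrightarrow> 0 \<le> T \<Longrightarrow> 0 < gam + theta lam s d i * T"
  using gam_less_theta[of d i] gam_pos by (simp add: add_pos_nonneg)

lemma weight_strict_antimono:
  assumes "d \<in> {1..D}" "i \<in> {1..n d}" "0 \<le> T1" "T1 < T2"
  shows "weight d i T2 < weight d i T1"
proof -
  have "0 < theta lam s d i" using gam_less_theta[OF assms(1,2)] gam_pos by simp
  then show ?thesis
    unfolding weight_def
    using weight_denom_pos[OF assms(1,2), of T1] weight_denom_pos[OF assms(1,2), of T2] assms(3,4)
    by (intro divide_strict_left_mono) (auto intro!: mult_pos_pos mult_strict_left_mono)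
qed

lemma weight_continuous:
  "d \<in> {1..D} \<Longrightarrow> i \<in> {1..n d} \<Longrightarrow> 0 \<le> T0 \<Longrightarrow> (weight d i \<longlongrightarrow> weight d i T0) (nhds T0)"
  unfolding weight_def using weight_denom_pos[of d i T0]
  by (intro tendsto_intros) (auto simp: filterlim_ident)

lemma steady_rhs_strict_antimono:
  assumes x: "x \<in> social_states D m n" and T: "0 < T1" "T1 < T2"
  shows "steady_rhs x T2 < steady_rhs x T1"
proof -
  have inner: "(\<Sum>i\<in>{1..n d}. x d i * weight d i T2) < (\<Sum>i\<in>{1..n d}. x d i * weight d i T1)"
    if d: "d \<in> {1..D}" for d
  proof -
    have x_nonneg: "\<forall>i\<in>{1..n d}. 0 \<le> x d i" and x_sum: "(\<Sum>i\<in>{1..n d}. x d i) = m d"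
      using x d by (auto simp: social_states_def)
    obtain i where i: "i \<in> {1..n d}" "0 < x d i"
      using x_nonneg x_sum m_pos[OF d] sum_nonneg_eq_0_iff[of "{1..n d}" "x d"]
      by (force simp: le_less)
    show ?thesis
    proof (rule sum_strict_mono_ex1)
      show "\<forall>j\<in>{1..n d}. x d j * weight d j T2 \<le> x d j * weight d j T1"
        using x_nonneg less_imp_le[OF weight_strict_antimono[OF d _ _ T(2)]] T(1)
        by (auto intro!: mult_left_mono)
      show "\<exists>j\<in>{1..n d}. x d j * weight d j T2 < x d j * weight d j T1"
        using i weight_strict_antimono[OF d i(1) _ T(2)] T(1) by (auto intro!: bexI[of _ i])
    qed simp
  qed
  have "(\<Sum>d\<in>{1..D}. real d * (\<Sum>i\<in>{1..n d}. x d i * weight d i T2))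
      < (\<Sum>d\<in>{1..D}. real d * (\<Sum>i\<in>{1..n d}. x d i * weight d i T1))"
    using D_pos inner by (intro sum_strict_mono) simp_all
  then show ?thesis unfolding steady_rhs_def using dbar_pos by (rule divide_strict_right_mono)
qed

lemma Thetabar_eqI:
  assumes x: "x \<in> social_states D m n" and T: "0 < T" "steady_rhs x T = 1"
  shows "Thetabar lam gam D m n s x = T"
proof -
  have steady_rhs_eq: "steady_rhs x \<Theta> = 1 / dbar D m * (\<Sum>d\<in>{1..D}. real d *
      (\<Sum>i\<in>{1..n d}. x d i * theta lam s d i / (gam + theta lam s d i * \<Theta>)))" for \<Theta>
    by (simp add: steady_rhs_def weight_def)
  show ?thesis
    unfolding Thetabar_def steady_rhs_eq[symmetric]
  proof (rule the_equality)
    fix \<Theta> assume "0 < \<Theta> \<and> 1 = steady_rhs x \<Theta>"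
    then show "\<Theta> = T"
      using steady_rhs_strict_antimono[OF x] T by (metis less_irrefl linorder_neqE_linordered_idom)
  qed (use T in simp)
qed

definition payoff_at :: "nat \<Rightarrow> nat \<Rightarrow> real \<Rightarrow> real" where
  "payoff_at d i T =
     s d i * r - (1 - s d i) * (theta lam s d i * T / (gam + theta lam s d i * T))"

lemma payoff_eq_payoff_at:
  "Thetabar lam gam D m n s x = T \<Longrightarrow> payoff lam gam r D m n s x d i = payoff_at d i T"
  unfolding payoff_def Ibar_def payoff_at_def by simp

lemma payoff_at_continuous:
  "d \<in> {1..D} \<Longrightarrow> i \<in> {1..n d} \<Longrightarrow> 0 \<le> T0 \<Longrightarrow>
    (payoff_at d i \<longlongrightarrow> payoff_at d i T0) (nhds T0)"
  unfolding payoff_at_def using weight_denom_pos[of d i T0]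
  by (intro tendsto_intros) (auto simp: filterlim_ident)

definition best_responses :: "nat \<Rightarrow> real \<Rightarrow> nat set" where
  "best_responses d T = {i \<in> {1..n d}. \<forall>j\<in>{1..n d}. payoff_at d j T \<le> payoff_at d i T}"

lemma best_responses_subset: "best_responses d T \<subseteq> {1..n d}"
  by (auto simp: best_responses_def)

lemma finite_best_responses [simp]: "finite (best_responses d T)"
  using best_responses_subset by (rule finite_subset) simp

lemma best_responses_nonempty:
  assumes "d \<in> {1..D}"
  shows "best_responses d T \<noteq> {}"
proof -
  have "{1..n d} \<noteq> {}" using n_pos[OF assms] by simp
  then have "(MAX j\<in>{1..n d}. payoff_at d j T) \<in> (\<lambda>j. payoff_at d j T) ` {1..n d}"
    by (intro Max_in) auto
  then obtain i where "i \<in> {1..n d}" "payoff_at d i T = (MAX j\<in>{1..n d}. payoff_at d j T)"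
    by auto
  then have "i \<in> best_responses d T" by (auto simp: best_responses_def)
  then show ?thesis by blast
qed

lemma best_responses_eventually_subset:
  assumes d: "d \<in> {1..D}" and T0: "0 \<le> T0"
  shows "eventually (\<lambda>T. best_responses d T \<subseteq> best_responses d T0) (nhds T0)"
proof -
  have "eventually (\<lambda>T. j \<notin> best_responses d T) (nhds T0)"
    if j: "j \<in> {1..n d} - best_responses d T0" for j
  proof -
    obtain i where i: "i \<in> {1..n d}" "payoff_at d j T0 < payoff_at d i T0"
      using j by (auto simp: best_responses_def not_le)
    have "((\<lambda>T. payoff_at d i T - payoff_at d j T) \<longlongrightarrow> payoff_at d i T0 - payoff_at d j T0) (nhds T0)"
      using j by (intro tendsto_diff payoff_at_continuous d i(1) T0) auto
    then have "eventually (\<lambda>T. payoff_at d j T < payoff_at d i T) (nhds T0)"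
      using i(2) order_tendstoD(1)[of _ _ _ 0] by force
    then show ?thesis by eventually_elim (use i in \<open>auto simp: best_responses_def not_le\<close>)
  qed
  then have "eventually (\<lambda>T. \<forall>j\<in>{1..n d} - best_responses d T0. j \<notin> best_responses d T) (nhds T0)"
    by (intro eventually_ball_finite) auto
  then show ?thesis by eventually_elim (use best_responses_subset in blast)
qed

definition min_weight :: "nat \<Rightarrow> real \<Rightarrow> real" where
  "min_weight d T = Min ((\<lambda>i. weight d i T) ` best_responses d T)"

definition max_weight :: "nat \<Rightarrow> real \<Rightarrow> real" where
  "max_weight d T = Max ((\<lambda>i. weight d i T) ` best_responses d T)"

lemma min_weight_attained:
  assumes "d \<in> {1..D}"
  obtains i where "i \<in> best_responses d T" "weight d i T = min_weight d T"
proof -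
  have "min_weight d T \<in> (\<lambda>i. weight d i T) ` best_responses d T"
    unfolding min_weight_def using best_responses_nonempty[OF assms] by (intro Min_in) auto
  then show ?thesis using that by auto
qed

lemma max_weight_attained:
  assumes "d \<in> {1..D}"
  obtains i where "i \<in> best_responses d T" "weight d i T = max_weight d T"
proof -
  have "max_weight d T \<in> (\<lambda>i. weight d i T) ` best_responses d T"
    unfolding max_weight_def using best_responses_nonempty[OF assms] by (intro Max_in) auto
  then show ?thesis using that by auto
qed

lemma min_weight_le: "i \<in> best_responses d T \<Longrightarrow> min_weight d T \<le> weight d i T"
  unfolding min_weight_def by (rule Min_le) auto

lemma max_weight_ge: "i \<in> best_responses d T \<Longrightarrow> weight d i T \<le> max_weight d T"
  unfolding max_weight_def by (rule Max_ge) auto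

lemma min_weight_le_max_weight: "d \<in> {1..D} \<Longrightarrow> min_weight d T \<le> max_weight d T"
  by (metis min_weight_attained max_weight_ge)

lemma min_weight_eventually_gt:
  assumes d: "d \<in> {1..D}" and T0: "0 \<le> T0" and c: "c < min_weight d T0"
  shows "eventually (\<lambda>T. c < min_weight d T) (nhds T0)"
proof -
  have "eventually (\<lambda>T. c < weight d i T) (nhds T0)" if "i \<in> best_responses d T0" for i
    using subsetD[OF best_responses_subset that] c min_weight_le[OF that]
    by (intro order_tendstoD(1)[OF weight_continuous[OF d _ T0]]) auto
  then have "eventually (\<lambda>T. \<forall>i\<in>best_responses d T0. c < weight d i T) (nhds T0)"
    by (intro eventually_ball_finite) auto
  with best_responses_eventually_subset[OF d T0] show ?thesis
  proof eventually_elim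
    case (elim T)
    obtain i where "i \<in> best_responses d T" "weight d i T = min_weight d T"
      using min_weight_attained[OF d] .
    with elim show ?case by (metis subsetD)
  qed
qed

lemma max_weight_eventually_lt:
  assumes d: "d \<in> {1..D}" and T0: "0 \<le> T0" and c: "max_weight d T0 < c"
  shows "eventually (\<lambda>T. max_weight d T < c) (nhds T0)"
proof -
  have "eventually (\<lambda>T. weight d i T < c) (nhds T0)" if "i \<in> best_responses d T0" for i
    using subsetD[OF best_responses_subset that] c max_weight_ge[OF that]
    by (intro order_tendstoD(2)[OF weight_continuous[OF d _ T0]]) auto
  then have "eventually (\<lambda>T. \<forall>i\<in>best_responses d T0. weight d i T < c) (nhds T0)"
    by (intro eventually_ball_finite) auto
  with best_responses_eventually_subset[OF d T0] show ?thesis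
  proof eventually_elim
    case (elim T)
    obtain i where "i \<in> best_responses d T" "weight d i T = max_weight d T"
      using max_weight_attained[OF d] .
    with elim show ?case by (metis subsetD)
  qed
qed

definition low_rhs :: "real \<Rightarrow> real" where
  "low_rhs T = deg_avg (\<lambda>d. min_weight d T)"

definition high_rhs :: "real \<Rightarrow> real" where
  "high_rhs T = deg_avg (\<lambda>d. max_weight d T)"

lemma low_rhs_le_high_rhs: "low_rhs T \<le> high_rhs T"
  unfolding low_rhs_def high_rhs_def by (intro deg_avg_mono min_weight_le_max_weight)

lemma open_low_rhs_gt_one: "open {T. 0 < T \<and> 1 < low_rhs T}"
proof (rule open_Collect_if_eventually)
  fix T0 assume T0: "0 < T0 \<and> 1 < low_rhs T0"
  define e where "e = low_rhs T0 - 1"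
  have "eventually (\<lambda>T. \<forall>d\<in>{1..D}. min_weight d T0 - e < min_weight d T) (nhds T0)"
    using T0 by (intro eventually_ball_finite ballI min_weight_eventually_gt) (auto simp: e_def)
  moreover have "eventually (\<lambda>T. 0 < T) (nhds T0)"
    using T0 by (intro eventually_nhds_in_open[of "{0<..}", simplified]) auto
  ultimately show "eventually (\<lambda>T. 0 < T \<and> 1 < low_rhs T) (nhds T0)"
  proof eventually_elim
    case (elim T)
    then have "deg_avg (\<lambda>d. min_weight d T0 + - e) < low_rhs T"
      unfolding low_rhs_def by (intro deg_avg_strict_mono) auto
    then show ?case using elim unfolding deg_avg_add_const by (simp add: low_rhs_def e_def)
  qed
qed

lemma open_high_rhs_lt_one: "open {T. 0 < T \<and> high_rhs T < 1}"
proof (rule open_Collect_if_eventually)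
  fix T0 assume T0: "0 < T0 \<and> high_rhs T0 < 1"
  define e where "e = 1 - high_rhs T0"
  have "eventually (\<lambda>T. \<forall>d\<in>{1..D}. max_weight d T < max_weight d T0 + e) (nhds T0)"
    using T0 by (intro eventually_ball_finite ballI max_weight_eventually_lt) (auto simp: e_def)
  moreover have "eventually (\<lambda>T. 0 < T) (nhds T0)"
    using T0 by (intro eventually_nhds_in_open[of "{0<..}", simplified]) auto
  ultimately show "eventually (\<lambda>T. 0 < T \<and> high_rhs T < 1) (nhds T0)"
  proof eventually_elim
    case (elim T)
    then have "high_rhs T < deg_avg (\<lambda>d. max_weight d T0 + e)"
      unfolding high_rhs_def by (intro deg_avg_strict_mono) auto
    then show ?case using elim unfolding deg_avg_add_const by (simp add: high_rhs_def e_def)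
  qed
qed

lemma low_rhs_gt_one_near_zero: "\<exists>T>0. 1 < low_rhs T"
proof -
  have "eventually (\<lambda>T. 1 < weight d i T) (nhds 0)" if "d \<in> {1..D}" "i \<in> {1..n d}" for d i
    using gam_less_theta[OF that] gam_pos
    by (intro order_tendstoD(1)[OF weight_continuous[OF that order_refl]]) (simp add: weight_def)
  then have "eventually (\<lambda>T. \<forall>d\<in>{1..D}. \<forall>i\<in>{1..n d}. 1 < weight d i T) (nhds 0)"
    by (intro eventually_ball_finite ballI) auto
  then have "eventually (\<lambda>T. \<forall>d\<in>{1..D}. \<forall>i\<in>{1..n d}. 1 < weight d i T) (at_right 0)"
    unfolding eventually_at_filter by eventually_elim simp
  then obtain T where T: "0 < T" "\<forall>d\<in>{1..D}. \<forall>i\<in>{1..n d}. 1 < weight d i T"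
    using eventually_happens'[OF _ eventually_conj[OF eventually_at_right_less]] by force
  have "1 < min_weight d T" if d: "d \<in> {1..D}" for d
    using min_weight_attained[OF d] best_responses_subset T(2) d by (metis subsetD)
  then have "deg_avg (\<lambda>_. 1) < low_rhs T"
    unfolding low_rhs_def by (rule deg_avg_strict_mono)
  then show ?thesis using T(1) by (auto simp: deg_avg_const)
qed

lemma high_rhs_one_lt_one: "high_rhs 1 < 1"
proof -
  have "max_weight d 1 < 1" if d: "d \<in> {1..D}" for d
  proof -
    obtain i where i: "i \<in> best_responses d 1" "weight d i 1 = max_weight d 1"
      using max_weight_attained[OF d] .
    have "0 < theta lam s d i"
      using gam_less_theta[OF d] gam_pos subsetD[OF best_responses_subset i(1)] by force
    then show ?thesis using i(2)[symmetric] gam_pos by (simp add: weight_def)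
  qed
  then have "high_rhs 1 < deg_avg (\<lambda>_. 1)"
    unfolding high_rhs_def by (rule deg_avg_strict_mono)
  then show ?thesis by (simp add: deg_avg_const)
qed

lemma exists_balanced_Theta: "\<exists>T>0. low_rhs T \<le> 1 \<and> 1 \<le> high_rhs T"
proof (rule ccontr)
  assume "\<not> ?thesis"
  then have cover: "{0<..} \<subseteq> {T. 0 < T \<and> 1 < low_rhs T} \<union> {T. 0 < T \<and> high_rhs T < 1}"
    by force
  have disjoint: "{T. 0 < T \<and> 1 < low_rhs T} \<inter> {T. 0 < T \<and> high_rhs T < 1} \<inter> {0<..} = {}"
  proof -
    have "\<not> (1 < low_rhs T \<and> high_rhs T < 1)" for T
      using low_rhs_le_high_rhs[of T] by linarith
    then show ?thesis by blast
  qed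
  have "{T. 0 < T \<and> 1 < low_rhs T} \<inter> {0<..} \<noteq> {}"
    using low_rhs_gt_one_near_zero by auto
  moreover have "{T. 0 < T \<and> high_rhs T < 1} \<inter> {0<..} \<noteq> {}"
    using high_rhs_one_lt_one by force
  ultimately show False
    using connectedD[OF connected_Ioi open_low_rhs_gt_one open_high_rhs_lt_one disjoint cover]
    by blast
qed

lemma nash_eq_if_supported_on_best_responses:
  assumes x: "x \<in> social_states D m n" and T: "0 < T" "steady_rhs x T = 1"
    and support: "\<And>d i. d \<in> {1..D} \<Longrightarrow> i \<in> {1..n d} \<Longrightarrow> 0 < x d i \<Longrightarrow>
      i \<in> best_responses d T"
  shows "nash_eq lam gam r D m n s x"
  unfolding nash_eq_def
proof (intro conjI x ballI impI)
  fix d i assume "d \<in> {1..D}" "i \<in> {1..n d}" "0 < x d i"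
  then have "i \<in> best_responses d T" by (rule support)
  then show "payoff lam gam r D m n s x d i = (MAX j\<in>{1..n d}. payoff lam gam r D m n s x d j)"
    unfolding payoff_eq_payoff_at[OF Thetabar_eqI[OF x T]]
    by (intro Max_eqI[symmetric]) (auto simp: best_responses_def)
qed

lemma exists_mixture_of_best_responses:
  assumes t: "0 \<le> t" "t \<le> 1"
  obtains x where "x \<in> social_states D m n"
    "steady_rhs x T = t * low_rhs T + (1 - t) * high_rhs T"
    "\<And>d i. d \<in> {1..D} \<Longrightarrow> 0 < x d i \<Longrightarrow> i \<in> best_responses d T"
proof -
  define lo where "lo d = (SOME i. i \<in> best_responses d T \<and> weight d i T = min_weight d T)" for d
  define hi where "hi d = (SOME i. i \<in> best_responses d T \<and> weight d i T = max_weight d T)" for d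
  have lo: "lo d \<in> best_responses d T \<and> weight d (lo d) T = min_weight d T"
    if "d \<in> {1..D}" for d
    unfolding lo_def by (rule someI_ex) (metis min_weight_attained[OF that])
  have hi: "hi d \<in> best_responses d T \<and> weight d (hi d) T = max_weight d T"
    if "d \<in> {1..D}" for d
    unfolding hi_def by (rule someI_ex) (metis max_weight_attained[OF that])
  define x where
    "x d i = m d * ((if i = lo d then t else 0) + (if i = hi d then 1 - t else 0))" for d i
  have mix: "(\<Sum>i\<in>{1..n d}. x d i * h i) = m d * (t * h (lo d) + (1 - t) * h (hi d))"
    if d: "d \<in> {1..D}" for d and h :: "nat \<Rightarrow> real"
  proof -
    have "(\<Sum>i\<in>{1..n d}. x d i * h i) = (\<Sum>i\<in>{1..n d}.
        (if i = lo d then m d * t * h i else 0) + (if i = hi d then m d * (1 - t) * h i else 0))"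
      by (rule sum.cong) (simp_all add: x_def algebra_simps)
    also have "\<dots> = m d * t * h (lo d) + m d * (1 - t) * h (hi d)"
      using subsetD[OF best_responses_subset, of "lo d" d T] subsetD[OF best_responses_subset, of "hi d" d T]
        lo[OF d] hi[OF d] by (simp add: sum.distrib)
    finally show ?thesis by (simp add: algebra_simps)
  qed
  have x_state: "x \<in> social_states D m n"
    unfolding social_states_def
  proof (intro CollectI ballI conjI)
    fix d i assume "d \<in> {1..D}"
    then show "0 \<le> x d i" using m_pos[of d] t(1,2) by (simp add: x_def)
  next
    fix d assume "d \<in> {1..D}"
    then show "(\<Sum>i\<in>{1..n d}. x d i) = m d" using mix[of d "\<lambda>_. 1"] by simp
  qed
  have per_degree: "real d * (\<Sum>i\<in>{1..n d}. x d i * weight d i T) =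
      real d * m d * (t * min_weight d T + (1 - t) * max_weight d T + 0)"
    if "d \<in> {1..D}" for d
    using mix[OF that, of "\<lambda>i. weight d i T"] lo[OF that] hi[OF that] by simp
  have "steady_rhs x T = deg_avg (\<lambda>d. t * min_weight d T + (1 - t) * max_weight d T + 0)"
    unfolding steady_rhs_def deg_avg_def using per_degree by (simp add: mult.assoc)
  also have "\<dots> = t * low_rhs T + (1 - t) * high_rhs T"
    by (simp only: deg_avg_affine low_rhs_def high_rhs_def)
  finally have "steady_rhs x T = t * low_rhs T + (1 - t) * high_rhs T" .
  moreover have "i \<in> best_responses d T" if "d \<in> {1..D}" "0 < x d i" for d i
    using that lo hi by (auto simp: x_def split: if_splits)
  ultimately show ?thesis by (rule that[OF x_state])
qed

lemma exists_nash_eq: "\<exists>x. nash_eq lam gam r D m n s x"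
proof -
  obtain T where T: "0 < T" "low_rhs T \<le> 1" "1 \<le> high_rhs T"
    using exists_balanced_Theta by blast
  obtain t where t: "0 \<le> t" "t \<le> 1" "t * low_rhs T + (1 - t) * high_rhs T = 1"
    using ex_convex_combination_eq[OF T(2,3)] .
  obtain x where "x \<in> social_states D m n" "steady_rhs x T = 1"
    "\<And>d i. d \<in> {1..D} \<Longrightarrow> 0 < x d i \<Longrightarrow> i \<in> best_responses d T"
    using exists_mixture_of_best_responses[OF t(1,2), of T] t(3) by metis
  then show ?thesis using nash_eq_if_supported_on_best_responses T(1) by blast
qed

end

theorem theorem3:
  fixes lam gam r :: real and D :: nat and m :: "nat \<Rightarrow> real" and n :: "nat \<Rightarrow> nat"
    and s :: "nat \<Rightarrow> nat \<Rightarrow> real" and xs :: "nat \<Rightarrow> nat \<Rightarrow> real"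
  assumes D_pos: "D \<ge> 1"
    and m_pos: "\<forall>d\<in>{1..D}. 0 < m d \<and> m d \<le> 1"
    and m_sum: "(\<Sum>d\<in>{1..D}. m d) = 1"
    and n_pos: "\<forall>d\<in>{1..D}. n d \<ge> 1"
    and s_range: "\<forall>d\<in>{1..D}. \<forall>i\<in>{1..n d}. 0 \<le> s d i \<and> s d i \<le> 1"
    and s_mono: "\<forall>d\<in>{1..D}. \<forall>i\<in>{1..n d}. \<forall>j\<in>{1..n d}. i < j \<longrightarrow> s d i < s d j"
    and lam_pos: "lam > 0" and gam_pos: "gam > 0" and r_neg: "r < 0"
    and hyp: "\<forall>d\<in>{1..D}. \<forall>i\<in>{1..n d}. lam * real d * (1 - s d i) > gam"
    and xs_state: "xs \<in> social_states D m n"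
  shows "(nash_eq lam gam r D m n s xs \<longleftrightarrow>
           (\<exists>ys. feasible lam gam r D m n s xs ys \<and>
              (\<forall>x y. feasible lam gam r D m n s x y \<longrightarrow>
                 objective lam gam r D m n s xs ys \<le> objective lam gam r D m n s x y)))
       \<and> (\<forall>x y. feasible lam gam r D m n s x y \<longrightarrow> objective lam gam r D m n s x y \<ge> 0)
       \<and> (\<exists>x y. feasible lam gam r D m n s x y \<and> objective lam gam r D m n s x y = 0)"
proof -
  interpret sis_game lam gam r D m n s
    using D_pos m_pos n_pos gam_pos hyp by unfold_locales (auto simp: theta_def)
  have nonneg: "\<forall>x y. feasible lam gam r D m n s x y \<longrightarrow> objective lam gam r D m n s x y \<ge> 0"
    using objective_nonneg by blast
  obtain x0 y0 where zero: "feasible lam gam r D m n s x0 y0" "objective lam gam r D m n s x0 y0 = 0"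
    using exists_nash_eq objective_zero_if_nash_eq by blast
  have "nash_eq lam gam r D m n s xs \<longleftrightarrow>
      (\<exists>ys. feasible lam gam r D m n s xs ys \<and>
         (\<forall>x y. feasible lam gam r D m n s x y \<longrightarrow>
            objective lam gam r D m n s xs ys \<le> objective lam gam r D m n s x y))"
  proof
    assume "nash_eq lam gam r D m n s xs"
    then obtain ys where ys: "feasible lam gam r D m n s xs ys" "objective lam gam r D m n s xs ys = 0"
      using objective_zero_if_nash_eq by blast
    show "\<exists>ys. feasible lam gam r D m n s xs ys \<and>
        (\<forall>x y. feasible lam gam r D m n s x y \<longrightarrow>
           objective lam gam r D m n s xs ys \<le> objective lam gam r D m n s x y)"
      using ys nonneg by (intro exI[of _ ys]) simp
  next
    assume "\<exists>ys. feasible lam gam r D m n s xs ys \<and>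
        (\<forall>x y. feasible lam gam r D m n s x y \<longrightarrow>
           objective lam gam r D m n s xs ys \<le> objective lam gam r D m n s x y)"
    then obtain ys where feas: "feasible lam gam r D m n s xs ys"
      and "objective lam gam r D m n s xs ys \<le> objective lam gam r D m n s x0 y0"
      using zero(1) by blast
    with zero(2) nonneg[rule_format, OF feas] have "objective lam gam r D m n s xs ys = 0"
      by linarith
    with feas show "nash_eq lam gam r D m n s xs" by (rule nash_eq_if_objective_zero)
  qed
  with nonneg zero(1,2) show ?thesis by (intro conjI exI) assumption+
qed

end
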